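(* Let $n\ge k\ge 2$ be integers. For a probability vector $\lambda=(\lambda_1,\ldots,\lambda_n)$ (identified with the diagonal density matrix $\mathrm{diag}(\lambda_1,\ldots,\lambda_n)$) define $\rho^P(\lambda)\in\mathbb{R}^n$ by $\rho^P(\lambda)_i=\frac1k\sum_{j=i}^{i+k-1}\lambda_j$, indices taken modulo $n$ (this is the map induced by the POVM $P=(\tfrac1kQ_i)_{i=1}^n$, $Q_i$ the diagonal matrix with $1$ in positions $i,i+1,\ldots,i+k-1$ mod $n$ and $0$ elsewhere). Then the map $\lambda\mapsto\rho^P(\lambda)$ on probability vectors is injective (the POVM is informationally complete) if and only if $k$ and $n$ are coprime.
   Context: A probability vector in $\mathbb{R}^n$ has non-negative entries summing to $1$. The POVM is called informationally complete if the map $\rho\mapsto\rho^P$ on (here diagonal) density matrices is injective. *)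

theory Defs
  imports Complex_Main
begin

text \<open>Vectors in R^n are modelled as functions nat => real, indices 0..n-1
  (the paper's index i corresponds to i-1 here), zero outside.\<close>

definition prob_vecs :: "nat \<Rightarrow> (nat \<Rightarrow> real) set" where
  "prob_vecs n = {l. (\<forall>i<n. 0 \<le> l i) \<and> (\<forall>i\<ge>n. l i = 0) \<and> (\<Sum>i<n. l i) = 1}"

definition rhoP :: "nat \<Rightarrow> nat \<Rightarrow> (nat \<Rightarrow> real) \<Rightarrow> (nat \<Rightarrow> real)" where
  "rhoP n k l = (\<lambda>i. if i < n then (1 / real k) * (\<Sum>j=i..<i+k. l (j mod n)) else 0)"

end

theory Submission
  imports Defs
begin

text \<open>If the difference d of two preimages is extended n-periodically, equality of all
  cyclic window sums of length k says exactly that d is also k-periodic; hence d has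
  period gcd k n. When this gcd is 1, d is constant and, having sum 0, vanishes. When
  g = gcd k n \<ge> 2, every window of length k meets each residue class mod g equally
  often, so the uniform distributions on two different residue classes mod g have the
  same image.\<close>

lemma periodic_add_mult:
  fixes f :: "nat \<Rightarrow> 'a" and m :: nat
  assumes "\<And>j. f (j + p) = f j"
  shows "f (j + m * p) = f j"
proof (induction m)
  case (Suc m)
  have "f (j + Suc m * p) = f (j + m * p + p)" by (simp add: algebra_simps)
  with Suc.IH assms show ?case by simp
qed simp

lemma periodic_gcd:
  fixes f :: "nat \<Rightarrow> 'a"
  assumes a: "\<And>j. f (j + a) = f j" and b: "\<And>j. f (j + b) = f j" and "a \<noteq> 0"
  shows "f (j + gcd a b) = f j"
proof -
  obtain x y where xy: "a * x = b * y + gcd a b" using bezout_nat[OF \<open>a \<noteq> 0\<close>] by blast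
  have "f (j + gcd a b) = f (j + gcd a b + y * b)" using periodic_add_mult[of f b, OF b] by simp
  also have "\<dots> = f (j + x * a)" using xy by (simp add: algebra_simps)
  also have "\<dots> = f j" using periodic_add_mult[of f a, OF a] by simp
  finally show ?thesis .
qed

lemma sum_window_Suc:
  fixes f :: "nat \<Rightarrow> 'a::comm_monoid_add"
  shows "f a + (\<Sum>j=Suc a..<Suc a+k. f j) = (\<Sum>j=a..<a+k. f j) + f (a + k)"
proof -
  have "(\<Sum>j=a..<Suc (a+k). f j) = f a + (\<Sum>j=Suc a..<Suc a+k. f j)"
    by (simp add: sum.atLeast_Suc_lessThan add.assoc)
  moreover have "(\<Sum>j=a..<Suc (a+k). f j) = (\<Sum>j=a..<a+k. f j) + f (a + k)"
    by simp
  ultimately show ?thesis by metis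
qed

lemma sum_periodic_window:
  fixes f :: "nat \<Rightarrow> 'a::cancel_comm_monoid_add"
  assumes "\<And>j. f (j + p) = f j"
  shows "(\<Sum>j=a..<a+p. f j) = (\<Sum>j<p. f j)"
proof (induction a)
  case (Suc a)
  from sum_window_Suc[of f a p] Suc.IH assms[of a] show ?case
    by (metis add.commute add_left_cancel)
qed (simp add: atLeast0LessThan)

lemma sum_periodic_window_mult:
  fixes f :: "nat \<Rightarrow> 'a::semiring_1_cancel"
  assumes "\<And>j. f (j + p) = f j"
  shows "(\<Sum>j=a..<a+q*p. f j) = of_nat q * (\<Sum>j<p. f j)"
proof (induction q)
  case (Suc q)
  have "(\<Sum>j=a..<a+Suc q*p. f j) = (\<Sum>j=a..<a+q*p. f j) + (\<Sum>j=a+q*p..<a+q*p+p. f j)"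
    by (metis sum.atLeastLessThan_concat le_add1 add.assoc mult_Suc add.commute)
  also have "\<dots> = of_nat q * (\<Sum>j<p. f j) + (\<Sum>j<p. f j)"
    using Suc.IH sum_periodic_window[of f p, OF assms] by presburger
  finally show ?case by (simp add: algebra_simps)
qed simp

lemma window_sum_mod_period:
  fixes f :: "nat \<Rightarrow> 'a::comm_monoid_add"
  assumes "\<And>j. f (j + n) = f j"
  shows "(\<Sum>j=i..<i+k. f j) = (\<Sum>j=i mod n..<i mod n+k. f j)"
proof -
  have "(\<Sum>j=i+n..<i+n+k. f j) = (\<Sum>j=i..<i+k. f j)" for i
    using sum.shift_bounds_nat_ivl[of f i n "i+k"] assms
    by (simp add: add.commute add.left_commute)
  from periodic_add_mult[where f = "\<lambda>i. \<Sum>j=i..<i+k. f j", OF this]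
  show ?thesis by (metis mod_div_mult_eq)
qed

lemma periodic_if_window_sums_eq_0:
  fixes f :: "nat \<Rightarrow> 'a::ab_group_add"
  assumes "\<And>i. (\<Sum>j=i..<i+k. f j) = 0"
  shows "f (j + k) = f j"
  using sum_window_Suc[of f j k] assms[of j] assms[of "Suc j"]
  by (metis add.right_neutral add.left_neutral)

lemma rhoP_eq_iff_window_sums_eq:
  assumes "0 < k"
  shows "rhoP n k l = rhoP n k m \<longleftrightarrow>
    (\<forall>i<n. (\<Sum>j=i..<i+k. l (j mod n)) = (\<Sum>j=i..<i+k. m (j mod n)))"
  using assms by (auto simp: rhoP_def fun_eq_iff)

lemma inj_on_rhoP_if_coprime:
  assumes "0 < k" and "coprime k n"
  shows "inj_on (rhoP n k) (prob_vecs n)"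
proof (rule inj_onI)
  fix l m assume l: "l \<in> prob_vecs n" and m: "m \<in> prob_vecs n"
    and eq: "rhoP n k l = rhoP n k m"
  have "0 < n" using l by (cases "n = 0") (auto simp: prob_vecs_def)
  define d where "d j = l (j mod n) - m (j mod n)" for j
  have d_period_n: "d (j + n) = d j" for j by (simp add: d_def)
  have "(\<Sum>j=i..<i+k. d j) = 0" if "i < n" for i
    using eq that \<open>0 < k\<close> by (simp add: rhoP_eq_iff_window_sums_eq d_def sum_subtractf)
  then have "(\<Sum>j=i..<i+k. d j) = 0" for i
    using window_sum_mod_period[of d n, OF d_period_n] \<open>0 < n\<close> by (metis mod_less_divisor)
  then have d_period_k: "d (j + k) = d j" for j
    by (rule periodic_if_window_sums_eq_0)
  have "d (j + 1) = d j" for j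
    using periodic_gcd[OF d_period_k d_period_n] \<open>0 < k\<close> \<open>coprime k n\<close> by simp
  then have d_const: "d j = d 0" for j by (induction j) simp_all
  have "real n * d 0 = (\<Sum>i<n. d i)" by (simp add: sum.cong[OF refl d_const])
  also have "\<dots> = (\<Sum>i<n. l i) - (\<Sum>i<n. m i)" by (simp add: d_def sum_subtractf)
  also have "\<dots> = 0" using l m by (simp add: prob_vecs_def)
  finally have "d 0 = 0" using \<open>0 < n\<close> by simp
  with d_const have "l j = m j" if "j < n" for j
    using that by (metis d_def eq_iff_diff_eq_0 mod_less)
  moreover have "l j = m j" if "\<not> j < n" for j
    using that l m by (simp add: prob_vecs_def)
  ultimately show "l = m" by blast
qed

definition residue_class_vec :: "nat \<Rightarrow> nat \<Rightarrow> nat \<Rightarrow> nat \<Rightarrow> real" where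
  "residue_class_vec n g r i = (if i < n \<and> i mod g = r then real g / real n else 0)"

lemma sum_residue_class_indicator:
  fixes c :: real
  assumes "r < g"
  shows "(\<Sum>j=a..<a+q*g. if j mod g = r then c else 0) = real q * c"
proof -
  have "(\<Sum>j<g. if j mod g = r then c else 0) = (\<Sum>j<g. if j = r then c else 0)"
    by (intro sum.cong) auto
  with assms sum_periodic_window_mult[of "\<lambda>j. if j mod g = r then c else 0" g a q]
  show ?thesis by simp
qed

lemma residue_class_vec_in_prob_vecs:
  assumes "0 < n" and "g dvd n" and "r < g"
  shows "residue_class_vec n g r \<in> prob_vecs n"
proof -
  obtain q where q: "n = q * g" using \<open>g dvd n\<close> by (metis dvd_def mult.commute)
  have "(\<Sum>i<n. residue_class_vec n g r i)
      = (\<Sum>j=0..<0+q*g. if j mod g = r then real g / real n else 0)"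
    unfolding q by (auto simp: residue_class_vec_def atLeast0LessThan intro: sum.cong)
  also have "\<dots> = 1"
    using sum_residue_class_indicator[where a = 0 and c = "real g / real n", OF \<open>r < g\<close>] q \<open>0 < n\<close>
    by simp
  finally show ?thesis by (simp add: prob_vecs_def residue_class_vec_def)
qed

lemma rhoP_residue_class_vec:
  assumes "0 < k" and "g dvd k" and "g dvd n" and "r < g"
  shows "rhoP n k (residue_class_vec n g r) = rhoP n k (residue_class_vec n g 0)"
proof -
  obtain q where q: "k = q * g" using \<open>g dvd k\<close> by (metis dvd_def mult.commute)
  have "(\<Sum>j=i..<i+k. residue_class_vec n g s (j mod n)) = real k / real n"
    if "s < g" "0 < n" for i s
  proof -
    have "(\<Sum>j=i..<i+k. residue_class_vec n g s (j mod n))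
        = (\<Sum>j=i..<i+q*g. if j mod g = s then real g / real n else 0)"
      using \<open>g dvd n\<close> \<open>0 < n\<close> by (simp add: residue_class_vec_def mod_mod_cancel q)
    also have "\<dots> = real k / real n" using sum_residue_class_indicator[OF \<open>s < g\<close>] q by simp
    finally show ?thesis .
  qed
  with assms show ?thesis by (simp add: rhoP_eq_iff_window_sums_eq)
qed

lemma not_inj_on_rhoP_if_not_coprime:
  assumes "0 < k" and "0 < n" and "\<not> coprime k n"
  shows "\<not> inj_on (rhoP n k) (prob_vecs n)"
proof
  assume inj: "inj_on (rhoP n k) (prob_vecs n)"
  define g where "g = gcd k n"
  have "1 < g" using assms by (simp add: g_def coprime_iff_gcd_eq_1 nat_neq_iff)
  have "g dvd k" "g dvd n" by (simp_all add: g_def)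
  have "residue_class_vec n g 1 = residue_class_vec n g 0"
  proof (rule inj_onD[OF inj])
    show "rhoP n k (residue_class_vec n g 1) = rhoP n k (residue_class_vec n g 0)"
      using rhoP_residue_class_vec \<open>0 < k\<close> \<open>g dvd k\<close> \<open>g dvd n\<close> \<open>1 < g\<close> by blast
    show "residue_class_vec n g 1 \<in> prob_vecs n" "residue_class_vec n g 0 \<in> prob_vecs n"
      using residue_class_vec_in_prob_vecs \<open>0 < n\<close> \<open>g dvd n\<close> \<open>1 < g\<close> by auto
  qed
  then have "residue_class_vec n g 1 1 = residue_class_vec n g 0 1" by simp
  moreover have "g \<le> n" using \<open>0 < n\<close> by (simp add: g_def)
  ultimately show False using \<open>1 < g\<close> \<open>0 < n\<close> by (simp add: residue_class_vec_def)
qed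

theorem proposition5p2:
  fixes n k :: nat
  assumes "2 \<le> k" and "k \<le> n"
  shows "inj_on (rhoP n k) (prob_vecs n) \<longleftrightarrow> coprime k n"
proof -
  have "0 < k" "0 < n" using assms by simp_all
  then show ?thesis using inj_on_rhoP_if_coprime not_inj_on_rhoP_if_not_coprime by blast
qed

end
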